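(* Let $n$ and $r$ be integers such that $r\geq 3$ and $n\geq r(r-1)\big((r-1)(r-2)+1\big)$. If $(r^2-r)$ divides $n$ and an affine plane of order $r$ exists, then there exists a graph $G$ on $n$ vertices with $$\delta(G) = \left(1-\frac{r-2}{r^2-r}\right)n-2$$ such that $\mathrm{mc}_r(G)< \frac{n}{r-1}$.
   Context: An affine plane of order $q$ is a $q$-uniform hypergraph on $q^2$ vertices (points) with $q(q+1)$ edges (lines) such that each pair of distinct points lies in exactly one line. $\delta(G)$ denotes the minimum degree of $G$. An $r$-coloring of $G$ means a coloring of the edges of $G$ with $r$ colors. For a graph $G$ and a positive integer $r$, $\mathrm{mc}_r(G)$ is the largest integer $m$ such that in every $r$-coloring of the edges of $G$ there is a monochromatic component (a maximal connected subgraph all of whose edges have one color) with at least $m$ vertices. *)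

theory Defs
  imports Complex_Main
begin

definition affine_plane :: "'a set \<Rightarrow> 'a set set \<Rightarrow> nat \<Rightarrow> bool" where
  "affine_plane P L q \<longleftrightarrow>
     finite P \<and> card P = q^2 \<and> finite L \<and> card L = q * (q + 1) \<and>
     (\<forall>l\<in>L. l \<subseteq> P \<and> card l = q) \<and>
     (\<forall>x\<in>P. \<forall>y\<in>P. x \<noteq> y \<longrightarrow> (\<exists>!l. l \<in> L \<and> x \<in> l \<and> y \<in> l))"

definition affine_plane_exists :: "nat \<Rightarrow> bool" where
  "affine_plane_exists q \<longleftrightarrow> (\<exists>(P :: nat set) L. affine_plane P L q)"

definition simple_graph :: "'a set \<Rightarrow> 'a set set \<Rightarrow> bool" where
  "simple_graph V E \<longleftrightarrow> finite V \<and> (\<forall>e\<in>E. e \<subseteq> V \<and> card e = 2)"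

definition degree :: "'a set set \<Rightarrow> 'a \<Rightarrow> nat" where
  "degree E v = card {e \<in> E. v \<in> e}"

definition min_degree :: "'a set \<Rightarrow> 'a set set \<Rightarrow> nat" where
  "min_degree V E = Min (degree E ` V)"

definition r_colouring :: "nat \<Rightarrow> 'a set set \<Rightarrow> ('a set \<Rightarrow> nat) \<Rightarrow> bool" where
  "r_colouring r E c \<longleftrightarrow> (\<forall>e\<in>E. c e < r)"

definition colour_adj :: "'a set set \<Rightarrow> ('a set \<Rightarrow> nat) \<Rightarrow> nat \<Rightarrow> ('a \<times> 'a) set" where
  "colour_adj E c i = {(x, y). {x, y} \<in> E \<and> c {x, y} = i}"

definition mono_component :: "'a set \<Rightarrow> 'a set set \<Rightarrow> ('a set \<Rightarrow> nat) \<Rightarrow> nat \<Rightarrow> 'a set \<Rightarrow> bool" where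
  "mono_component V E c i C \<longleftrightarrow>
     (\<exists>u\<in>V. C = {v \<in> V. (u, v) \<in> (colour_adj E c i)\<^sup>*})"

definition mc :: "nat \<Rightarrow> 'a set \<Rightarrow> 'a set set \<Rightarrow> nat" where
  "mc r V E = (GREATEST m. \<forall>c. r_colouring r E c \<longrightarrow>
       (\<exists>i<r. \<exists>C. mono_component V E c i C \<and> card C \<ge> m))"

end

theory Submission
  imports Defs "HOL-Library.Nat_Bijection"
begin

text \<open>Write n = r (r - 1) m, fix an affine plane of order r and call the lines parallel to a
  fixed line R0 rows. Using three parallel lines l0, l1, l2 choose a set of zero points and a
  set of heavy points, each meeting every row exactly once, and weight the points by 0, m + r - 2
  and m - 1 (all other points). Every row then has weight (r - 1) m, and every other line has
  weight less than r m: a line with two heavy points also has a zero point, and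
  m > (r - 1) (r - 2). Blow each point p up into weight p vertices and join two vertices unless
  they sit at distinct points of one row. A vertex at p misses exactly (r - 1) m - weight p
  vertices, which gives the minimum degree. The ends of an edge lie on a common line that is
  not a row, so colouring each edge by the direction of that line keeps every monochromatic
  component inside one such line, hence below r m = n / (r - 1) vertices.\<close>

definition adj_graph :: "'a set \<Rightarrow> ('a \<Rightarrow> 'a \<Rightarrow> bool) \<Rightarrow> 'a set set" where
  "adj_graph V adj = {{u, v} | u v. u \<in> V \<and> v \<in> V \<and> adj u v}"

lemma simple_graph_adj_graph:
  assumes "finite V" and "\<And>u v. adj u v \<Longrightarrow> u \<noteq> v"
  shows "simple_graph V (adj_graph V adj)"
  using assms unfolding simple_graph_def adj_graph_def by auto

lemma degree_adj_graph:
  assumes sym: "\<And>u v. adj u v \<Longrightarrow> adj v u" and v: "v \<in> V"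
  shows "degree (adj_graph V adj) v = card {u \<in> V. adj v u}"
proof -
  have "{e \<in> adj_graph V adj. v \<in> e} = (\<lambda>u. {v, u}) ` {u \<in> V. adj v u}"
    unfolding adj_graph_def using v sym by (auto simp: insert_commute)
  moreover have "inj_on (\<lambda>u. {v, u}) {u \<in> V. adj v u}"
    by (auto simp: inj_on_def doubleton_eq_iff)
  ultimately show ?thesis
    unfolding degree_def by (simp add: card_image)
qed

lemma colour_adj_rtrancl_invariant:
  assumes "\<And>x y. {x, y} \<in> E \<Longrightarrow> c {x, y} = i \<Longrightarrow> g x = g y"
    and "(u, v) \<in> (colour_adj E c i)\<^sup>*"
  shows "g v = g u"
  using assms(2) by induction (auto simp: colour_adj_def dest: assms(1))

text \<open>The hypothesis on V matters: for V empty no colouring has a component, and mc is the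
  unspecified GREATEST of an empty predicate.\<close>
lemma mc_less_if_components_less:
  assumes "r_colouring r E c" and "0 < r" and "V \<noteq> {}"
    and small: "\<And>i C. i < r \<Longrightarrow> mono_component V E c i C \<Longrightarrow> card C < b"
  shows "mc r V E < b"
proof -
  let ?good = "\<lambda>m. \<forall>c. r_colouring r E c \<longrightarrow> (\<exists>i<r. \<exists>C. mono_component V E c i C \<and> card C \<ge> m)"
  have bounded: "m < b" if "?good m" for m
    using that assms(1) small by fastforce
  obtain u where "u \<in> V" using assms(3) by blast
  then have "mono_component V E c' 0 {v \<in> V. (u, v) \<in> (colour_adj E c' 0)\<^sup>*}" for c'
    unfolding mono_component_def by blast
  then have "?good 0" using assms(2) by blast
  then have "?good (Greatest ?good)"
    by (rule GreatestI_nat) (use bounded less_imp_le in blast)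
  then show ?thesis unfolding mc_def by (rule bounded)
qed

definition parallel :: "'a set \<Rightarrow> 'a set \<Rightarrow> bool" where
  "parallel l l' \<longleftrightarrow> l = l' \<or> l \<inter> l' = {}"

lemma parallel_refl: "parallel l l"
  by (simp add: parallel_def)

lemma parallel_sym: "parallel l l' \<Longrightarrow> parallel l' l"
  by (auto simp: parallel_def)

locale finite_affine_plane =
  fixes P :: "'a set" and L :: "'a set set" and q :: nat
  assumes affine_plane: "affine_plane P L q" and order_ge_2: "2 \<le> q"
begin

lemma finite_points: "finite P" and card_points: "card P = q^2"
  and finite_lines: "finite L" and card_lines: "card L = q * (q + 1)"
  and line_subset: "l \<in> L \<Longrightarrow> l \<subseteq> P" and card_line: "l \<in> L \<Longrightarrow> card l = q"
  and ex1_line: "x \<in> P \<Longrightarrow> y \<in> P \<Longrightarrow> x \<noteq> y \<Longrightarrow> \<exists>!l. l \<in> L \<and> x \<in> l \<and> y \<in> l"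
  using affine_plane unfolding affine_plane_def by auto

lemma finite_line: "l \<in> L \<Longrightarrow> finite l"
  using line_subset finite_points finite_subset by blast

lemma line_eqI:
  "l \<in> L \<Longrightarrow> l' \<in> L \<Longrightarrow> x \<in> l \<inter> l' \<Longrightarrow> y \<in> l \<inter> l' \<Longrightarrow> x \<noteq> y \<Longrightarrow> l = l'"
  using ex1_line line_subset by blast

lemma card_lines_through:
  assumes x: "x \<in> P"
  shows "card {l \<in> L. x \<in> l} = q + 1"
proof -
  let ?X = "{l \<in> L. x \<in> l}"
  have partition: "P - {x} = (\<Union>l\<in>?X. l - {x})"
  proof
    show "P - {x} \<subseteq> (\<Union>l\<in>?X. l - {x})"
      using ex1_line[OF x] by blast
  qed (use line_subset in blast)
  have "card (P - {x}) = (\<Sum>l\<in>?X. card (l - {x}))"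
    unfolding partition
  proof (rule card_UN_disjoint)
    show "\<forall>l\<in>?X. \<forall>l'\<in>?X. l \<noteq> l' \<longrightarrow> (l - {x}) \<inter> (l' - {x}) = {}"
      using line_eqI by blast
  qed (use finite_lines finite_line in auto)
  also have "\<dots> = card ?X * (q - 1)"
    by (simp add: card_line finite_line)
  also have "card (P - {x}) = (q + 1) * (q - 1)"
    using x finite_points card_points by (cases q) (auto simp: power2_eq_square)
  finally have "card ?X * (q - 1) = (q + 1) * (q - 1)" ..
  moreover have "q - 1 \<noteq> 0"
    using order_ge_2 by simp
  ultimately show ?thesis
    by (metis mult_right_cancel)
qed

lemma ex1_parallel_through:
  assumes l: "l \<in> L" and x: "x \<in> P"
  shows "\<exists>!l'. l' \<in> L \<and> x \<in> l' \<and> parallel l l'"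
proof (cases "x \<in> l")
  case True
  then show ?thesis
    using l unfolding parallel_def by blast
next
  case False
  let ?X = "{l' \<in> L. x \<in> l'}"
  have "\<forall>y\<in>l. \<exists>j. j \<in> L \<and> x \<in> j \<and> y \<in> j"
    using ex1_line[OF x] line_subset[OF l] False by blast
  then obtain join where join: "\<And>y. y \<in> l \<Longrightarrow> join y \<in> L \<and> x \<in> join y \<and> y \<in> join y"
    by metis
  txt \<open>The q lines joining x to the points of l are distinct, which leaves exactly one of the
    q + 1 lines through x disjoint from l.\<close>
  have "inj_on join l"
  proof
    fix y y' assume "y \<in> l" "y' \<in> l" "join y = join y'"
    then show "y = y'"
      using join line_eqI[OF l, of "join y" y y'] False by blast
  qed
  then have "card (join ` l) = q"
    using card_image card_line l by metis
  moreover have "join ` l \<subseteq> ?X"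
    using join by blast
  ultimately have "card (?X - join ` l) = 1"
    using card_lines_through[OF x] finite_lines by (simp add: card_Diff_subset finite_subset)
  moreover have "?X - join ` l = {l' \<in> L. x \<in> l' \<and> parallel l l'}"
  proof -
    have "l \<inter> l' \<noteq> {} \<longleftrightarrow> l' \<in> join ` l" if "l' \<in> ?X" for l'
      using that join line_eqI False by blast
    then show ?thesis
      using False unfolding parallel_def by blast
  qed
  ultimately show ?thesis
    by (metis (no_types, lifting) card_1_singletonE mem_Collect_eq singletonD singletonI)
qed

lemma parallel_trans:
  assumes "l1 \<in> L" "l2 \<in> L" "l3 \<in> L" "parallel l1 l2" "parallel l2 l3"
  shows "parallel l1 l3"
proof (cases "l1 \<inter> l3 = {}")
  case False
  then obtain x where "x \<in> l1" "x \<in> l3" by blast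
  moreover have "x \<in> P"
    using \<open>x \<in> l1\<close> assms(1) line_subset by blast
  ultimately have "l1 = l3"
    using ex1_parallel_through[OF assms(2)] assms parallel_sym by blast
  then show ?thesis
    by (simp add: parallel_refl)
qed (simp add: parallel_def)

lemma nonparallel_Int:
  assumes "l \<in> L" "l' \<in> L" "\<not> parallel l l'"
  shows "\<exists>x. l \<inter> l' = {x}"
proof -
  obtain x where "x \<in> l \<inter> l'" "l \<noteq> l'"
    using assms(3) unfolding parallel_def by blast
  then show ?thesis
    using line_eqI[OF assms(1,2)] by blast
qed

lemma card_nonparallel_Int:
  "l \<in> L \<Longrightarrow> l' \<in> L \<Longrightarrow> \<not> parallel l l' \<Longrightarrow> card (l \<inter> l') = 1"
  using nonparallel_Int by fastforce

definition parallel_through :: "'a set \<Rightarrow> 'a \<Rightarrow> 'a set" where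
  "parallel_through l x = (THE l'. l' \<in> L \<and> x \<in> l' \<and> parallel l l')"

lemma parallel_through:
  assumes "l \<in> L" "x \<in> P"
  shows "parallel_through l x \<in> L" "x \<in> parallel_through l x" "parallel l (parallel_through l x)"
  using theI'[OF ex1_parallel_through[OF assms]] unfolding parallel_through_def by auto

lemma parallel_through_eqI:
  assumes "l \<in> L" "l' \<in> L" "x \<in> l'" "parallel l l'"
  shows "parallel_through l x = l'"
proof -
  have "x \<in> P"
    using assms(2,3) line_subset by blast
  then show ?thesis
    using ex1_parallel_through[OF assms(1)] parallel_through[OF assms(1)] assms(2-4) by blast
qed

lemma parallel_through_eq_iff:
  assumes "l \<in> L" "x \<in> P" "y \<in> P"
  shows "parallel_through l y = parallel_through l x \<longleftrightarrow> y \<in> parallel_through l x"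
  using parallel_through[OF assms(1)] parallel_through_eqI[OF assms(1)] assms(2,3) by metis

lemma Int_parallel_through:
  assumes "l \<in> L" "x \<in> P - l"
  shows "l \<inter> parallel_through l x = {}"
  using parallel_through[OF assms(1)] assms(2) unfolding parallel_def by auto

lemma ex_direction_enumeration:
  assumes R: "R \<in> L"
  shows "\<exists>f. (\<forall>i<q. f i \<in> L \<and> \<not> parallel (f i) R)
           \<and> (\<forall>l\<in>L. \<not> parallel l R \<longrightarrow> (\<exists>i<q. parallel (f i) l))"
proof -
  have "R \<noteq> {}"
    using card_line[OF R] order_ge_2 by auto
  then obtain x where x: "x \<in> R"
    by blast
  then have "x \<in> P"
    using line_subset R by blast
  let ?D = "{l \<in> L. x \<in> l} - {R}"
  have "card ?D = q"
    using card_lines_through[OF \<open>x \<in> P\<close>] R x finite_lines by simp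
  moreover have "finite ?D"
    using finite_lines by simp
  ultimately obtain f where f: "bij_betw f {..<q} ?D"
    by (metis ex_bij_betw_nat_finite atLeast0LessThan)
  have "f i \<in> L \<and> \<not> parallel (f i) R" if "i < q" for i
  proof -
    have "f i \<in> ?D"
      using bij_betwE[OF f] that by blast
    then show ?thesis
      using x unfolding parallel_def by blast
  qed
  moreover have "\<exists>i<q. parallel (f i) l" if l: "l \<in> L" "\<not> parallel l R" for l
  proof -
    have "parallel_through l x \<noteq> R"
      using parallel_through(3)[OF l(1) \<open>x \<in> P\<close>] l(2) by metis
    then have "parallel_through l x \<in> ?D"
      using parallel_through(1,2)[OF l(1) \<open>x \<in> P\<close>] by blast
    then have "parallel_through l x \<in> f ` {..<q}"
      using bij_betw_imp_surj_on[OF f] by simp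
    then obtain i where "i < q" "f i = parallel_through l x"
      by auto
    then show ?thesis
      using parallel_through(3)[OF l(1) \<open>x \<in> P\<close>] parallel_sym by metis
  qed
  ultimately show ?thesis by blast
qed

lemma ex_point_outside:
  assumes "finite S" "card S < q^2"
  shows "\<exists>x. x \<in> P - S"
proof -
  have "\<not> P \<subseteq> S"
    using assms card_mono[of S P] card_points by auto
  then show ?thesis
    by blast
qed

lemma ex_disjoint_lines:
  assumes "3 \<le> q" "l \<in> L"
  shows "\<exists>l1 l2. l1 \<in> L \<and> l2 \<in> L \<and> l \<inter> l1 = {} \<and> l \<inter> l2 = {} \<and> l1 \<inter> l2 = {}"
proof -
  have "2 * q < q^2"
    using assms(1) by (simp add: power2_eq_square)
  then obtain x1 where x1: "x1 \<in> P - l"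
    using ex_point_outside card_line finite_line assms(2) by fastforce
  define l1 where "l1 = parallel_through l x1"
  have l1: "l1 \<in> L" "l \<inter> l1 = {}" "parallel l l1"
    using parallel_through[OF assms(2)] Int_parallel_through[OF assms(2) x1] x1 unfolding l1_def by auto
  have "card (l \<union> l1) < q^2"
    using card_Un_le[of l l1] card_line l1(1) assms(2) \<open>2 * q < q^2\<close> by simp
  then obtain x2 where x2: "x2 \<in> P - (l \<union> l1)"
    using ex_point_outside finite_line l1(1) assms(2) by blast
  define l2 where "l2 = parallel_through l x2"
  have l2: "l2 \<in> L" "l \<inter> l2 = {}" "parallel l l2" "x2 \<in> l2"
    using parallel_through[OF assms(2)] Int_parallel_through[OF assms(2)] x2 unfolding l2_def by auto
  have "l1 \<inter> l2 = {}"
    using parallel_trans[OF l1(1) assms(2) l2(1)] parallel_sym[OF l1(3)] l2(3,4) x2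
    unfolding parallel_def by blast
  then show ?thesis
    using l1 l2 by blast
qed

end

locale plane_weighting = finite_affine_plane +
  fixes R0 l0 l1 l2 :: "'a set" and m :: nat
  assumes lines: "R0 \<in> L" "l0 \<in> L" "l1 \<in> L" "l2 \<in> L"
    and l0_nonparallel_R0: "\<not> parallel l0 R0"
    and disjoint: "l0 \<inter> l1 = {}" "l0 \<inter> l2 = {}" "l1 \<inter> l2 = {}"
    and m_large: "(q - 1) * (q - 2) + 1 \<le> m"
begin

definition zero_pts :: "'a set" where
  "zero_pts = (l0 - R0) \<union> (l1 \<inter> R0)"

definition heavy_pts :: "'a set" where
  "heavy_pts = (l1 - R0) \<union> (l2 \<inter> R0)"

definition weight :: "'a \<Rightarrow> nat" where
  "weight p = (if p \<in> zero_pts then 0 else if p \<in> heavy_pts then m + q - 2 else m - 1)"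

lemma nonparallel_R0: "\<not> parallel l1 R0" "\<not> parallel l2 R0"
  using parallel_trans[OF lines(2) _ lines(1)] l0_nonparallel_R0 disjoint lines
  unfolding parallel_def by blast+

lemma order_ge_3: "3 \<le> q"
proof -
  obtain a0 a1 a2 where "l0 \<inter> R0 = {a0}" "l1 \<inter> R0 = {a1}" "l2 \<inter> R0 = {a2}"
    using nonparallel_Int lines l0_nonparallel_R0 nonparallel_R0 by metis
  moreover from calculation have "a0 \<noteq> a1" "a0 \<noteq> a2" "a1 \<noteq> a2"
    using disjoint by blast+
  ultimately have "{a0, a1, a2} \<subseteq> R0" "card {a0, a1, a2} = 3"
    by auto
  then show ?thesis
    using card_mono[OF finite_line[OF lines(1)]] card_line[OF lines(1)] by metis
qed

lemma m_ge_2: "2 \<le> m"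
proof -
  have "2 * 1 \<le> (q - 1) * (q - 2)"
    using order_ge_3 by (intro mult_le_mono) auto
  then show ?thesis
    using m_large by linarith
qed

lemma zero_pts_Int_heavy_pts: "zero_pts \<inter> heavy_pts = {}"
  unfolding zero_pts_def heavy_pts_def using disjoint by blast

lemma int_sum_weight:
  assumes "finite S"
  shows "int (sum weight S) = int (card S) * (int m - 1) + (int q - 1) * int (card (S \<inter> heavy_pts))
           - (int m - 1) * int (card (S \<inter> zero_pts))"
proof -
  have "int (weight p) = (int m - 1) + (int q - 1) * of_bool (p \<in> heavy_pts)
          - (int m - 1) * of_bool (p \<in> zero_pts)" for p
    using zero_pts_Int_heavy_pts m_ge_2 order_ge_2 unfolding weight_def by auto
  then show ?thesis
    using assms by (simp add: sum.distrib sum_subtractf sum_distrib_left)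
qed

lemma card_row_Int:
  assumes R: "R \<in> L" "parallel R0 R"
  shows "card (R \<inter> zero_pts) = 1" "card (R \<inter> heavy_pts) = 1"
proof -
  have "card (R \<inter> zero_pts) = 1 \<and> card (R \<inter> heavy_pts) = 1"
  proof (cases "R = R0")
    case True
    then have "R \<inter> zero_pts = l1 \<inter> R0" "R \<inter> heavy_pts = l2 \<inter> R0"
      unfolding zero_pts_def heavy_pts_def by blast+
    then show ?thesis
      using card_nonparallel_Int lines nonparallel_R0 by metis
  next
    case False
    then have "R \<inter> zero_pts = R \<inter> l0" "R \<inter> heavy_pts = R \<inter> l1"
      using R unfolding zero_pts_def heavy_pts_def parallel_def by blast+
    moreover have "\<not> parallel R l0" "\<not> parallel R l1"
      using parallel_trans[OF lines(1) R(1)] R(2) lines parallel_sym l0_nonparallel_R0 nonparallel_R0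
      by metis+
    ultimately show ?thesis
      using card_nonparallel_Int R(1) lines by metis
  qed
  then show "card (R \<inter> zero_pts) = 1" "card (R \<inter> heavy_pts) = 1"
    by auto
qed

lemma sum_weight_row:
  assumes "R \<in> L" "parallel R0 R"
  shows "sum weight R = (q - 1) * m"
proof -
  have "int (sum weight R) = int q * (int m - 1) + (int q - 1) - (int m - 1)"
    using int_sum_weight[OF finite_line] card_row_Int card_line assms by simp
  also have "\<dots> = int ((q - 1) * m)"
    using order_ge_2 by (simp add: algebra_simps)
  finally show ?thesis
    by linarith
qed

text \<open>Two heavy points on a line l other than R0 cannot both lie on R0, cannot both lie on l1
  (then l = l1 passes through the zero point of l1 on R0), and one of each forces l to cross l0
  off R0, again in a zero point.\<close>
lemma card_Int_heavy_pts_le_1: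
  assumes l: "l \<in> L" "\<not> parallel l R0" and no_zero: "l \<inter> zero_pts = {}"
  shows "card (l \<inter> heavy_pts) \<le> 1"
proof -
  have "l \<noteq> R0"
    using l(2) parallel_refl by metis
  have mixed_impossible: False if a: "a \<in> l" "a \<in> l2 \<inter> R0" and b: "b \<in> l" "b \<in> l1 - R0" for a b
  proof -
    have "\<not> parallel l l1"
      using a b disjoint(3) unfolding parallel_def by blast
    then have "\<not> parallel l l0"
      using parallel_trans[OF l(1) lines(2,3)] disjoint(1) lines unfolding parallel_def by blast
    then obtain c where c: "l \<inter> l0 = {c}"
      using nonparallel_Int l(1) lines(2) by metis
    have "c \<notin> R0"
      using c a line_eqI[OF l(1) lines(1)] \<open>l \<noteq> R0\<close> disjoint(2) by blast
    then show False
      using c no_zero unfolding zero_pts_def by blast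
  qed
  have "x = y" if "x \<in> l \<inter> heavy_pts" "y \<in> l \<inter> heavy_pts" for x y
  proof (cases "x \<in> R0 \<longleftrightarrow> y \<in> R0")
    case True
    moreover have "l \<noteq> l1"
      using no_zero nonparallel_Int[OF lines(3,1) nonparallel_R0(1)] unfolding zero_pts_def by blast
    ultimately show ?thesis
      using that line_eqI[OF l(1) lines(1)] line_eqI[OF l(1) lines(3)] \<open>l \<noteq> R0\<close>
      unfolding heavy_pts_def by blast
  next
    case False
    then show ?thesis
      using that mixed_impossible unfolding heavy_pts_def by blast
  qed
  then show ?thesis
    using finite_line[OF l(1)] by (simp add: card_le_Suc0_iff_eq)
qed

lemma sum_weight_line:
  assumes l: "l \<in> L" "\<not> parallel l R0"
  shows "sum weight l < q * m"
proof -
  define h z where "h = card (l \<inter> heavy_pts)" and "z = card (l \<inter> zero_pts)"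
  have sum_l: "int (sum weight l) = int q * (int m - 1) + (int q - 1) * h - (int m - 1) * z"
    using int_sum_weight[OF finite_line] card_line l(1) unfolding h_def z_def by simp
  have "int (sum weight l) < int q * int m"
  proof (cases "z = 0")
    case True
    then have "h \<le> 1"
      using card_Int_heavy_pts_le_1 l finite_line unfolding h_def z_def by simp
    then have "(int q - 1) * h \<le> int q - 1"
      using order_ge_2 by (intro mult_left_le) auto
    then show ?thesis
      using sum_l True by (simp add: right_diff_distrib)
  next
    case False
    have "h + z \<le> q"
      using card_Un_disjoint[of "l \<inter> heavy_pts" "l \<inter> zero_pts"] zero_pts_Int_heavy_pts
        card_mono[OF finite_line[OF l(1)], of "(l \<inter> heavy_pts) \<union> (l \<inter> zero_pts)"]
        finite_line[OF l(1)] card_line[OF l(1)]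
      unfolding h_def z_def by fastforce
    then have "(int q - 1) * h \<le> (int q - 1) * (int q - 1)"
      using False order_ge_2 by (intro mult_left_mono) auto
    moreover have "int m - 1 \<le> (int m - 1) * z"
      using False m_ge_2 by (simp add: mult_le_cancel_left1)
    moreover have "(int q - 1) * (int q - 2) + 1 \<le> int m"
    proof -
      have "int ((q - 1) * (q - 2) + 1) \<le> int m"
        using m_large by (simp only: of_nat_le_iff)
      then show ?thesis
        using order_ge_3 by simp
    qed
    ultimately show ?thesis
      using sum_l by (simp add: algebra_simps)
  qed
  then show ?thesis
    by (simp only: of_nat_mult[symmetric] of_nat_less_iff)
qed

lemma card_zero_pts: "card zero_pts = q"
  and card_heavy_pts: "card heavy_pts = q"
proof -
  have "card (l - R0) = q - 1" "card (l \<inter> R0) = 1" if "l \<in> {l0, l1, l2}" for l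
    using that lines card_line card_nonparallel_Int l0_nonparallel_R0 nonparallel_R0 finite_line
    by (auto simp: card_Diff_subset_Int)
  then show "card zero_pts = q" "card heavy_pts = q"
    unfolding zero_pts_def heavy_pts_def using disjoint finite_line lines order_ge_2
    by (subst card_Un_disjoint; force)+
qed

lemma sum_weight_points: "sum weight P = q * (q - 1) * m"
proof -
  have "zero_pts \<subseteq> P" "heavy_pts \<subseteq> P"
    unfolding zero_pts_def heavy_pts_def using line_subset lines by auto
  then have "int (sum weight P) = int q ^ 2 * (int m - 1) + (int q - 1) * int q - (int m - 1) * int q"
    using int_sum_weight[OF finite_points] card_points card_zero_pts card_heavy_pts
    by (simp add: Int_absorb1)
  also have "\<dots> = int (q * (q - 1) * m)"
    using order_ge_2 by (simp add: power2_eq_square algebra_simps)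
  finally show ?thesis
    by linarith
qed

lemma weight_ge_if_pos: "0 < weight p \<Longrightarrow> m - 1 \<le> weight p"
  using order_ge_2 unfolding weight_def by (auto split: if_splits)

lemma ex_point_of_least_weight: "\<exists>p\<in>P. weight p = m - 1"
proof -
  obtain p where p: "l0 \<inter> R0 = {p}"
    using nonparallel_Int lines l0_nonparallel_R0 by metis
  then have "p \<notin> zero_pts \<and> p \<notin> heavy_pts"
    unfolding zero_pts_def heavy_pts_def using disjoint by blast
  moreover have "p \<in> P"
    using p line_subset lines by blast
  ultimately show ?thesis
    unfolding weight_def by auto
qed

end

locale plane_blow_up = plane_weighting P L q R0 l0 l1 l2 m
  for P :: "nat set" and L q R0 l0 l1 l2 m +
  fixes dir :: "nat \<Rightarrow> nat set"
  assumes dir_line: "i < q \<Longrightarrow> dir i \<in> L"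
    and dir_nonparallel_R0: "i < q \<Longrightarrow> \<not> parallel (dir i) R0"
    and dir_exhaustive: "l \<in> L \<Longrightarrow> \<not> parallel l R0 \<Longrightarrow> \<exists>i<q. parallel (dir i) l"
begin

definition vertices :: "nat set" where
  "vertices = prod_encode ` (SIGMA p:P. {..<weight p})"

definition point :: "nat \<Rightarrow> nat" where
  "point v = fst (prod_decode v)"

definition row :: "nat \<Rightarrow> nat set" where
  "row p = parallel_through R0 p"

definition adjacent :: "nat \<Rightarrow> nat \<Rightarrow> bool" where
  "adjacent u v \<longleftrightarrow> u \<noteq> v \<and> (point u = point v \<or> row (point u) \<noteq> row (point v))"

definition edges :: "nat set set" where
  "edges = adj_graph vertices adjacent"

lemma finite_vertices: "finite vertices"
  unfolding vertices_def using finite_points by simp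

lemma point_vertex: "v \<in> vertices \<Longrightarrow> point v \<in> P \<and> 0 < weight (point v)"
  unfolding vertices_def point_def by auto

lemma card_vertices_over:
  assumes "S \<subseteq> P"
  shows "card {v \<in> vertices. point v \<in> S} = sum weight S"
proof -
  have "{v \<in> vertices. point v \<in> S} = prod_encode ` (SIGMA p:S. {..<weight p})"
    using assms unfolding vertices_def point_def by auto
  moreover have "finite S"
    using assms finite_points finite_subset by blast
  ultimately show ?thesis
    by (simp add: card_image inj_on_def inj_prod_encode[THEN inj_eq] card_SigmaI)
qed

lemma card_vertices: "card vertices = q * (q - 1) * m"
proof -
  have "{v \<in> vertices. point v \<in> P} = vertices"
    using point_vertex by blast
  then show ?thesis
    using card_vertices_over[of P] sum_weight_points by simp
qed

lemma adjacent_sym: "adjacent u v \<Longrightarrow> adjacent v u"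
  unfolding adjacent_def by auto

lemma edge_iff: "{u, v} \<in> edges \<longleftrightarrow> u \<in> vertices \<and> v \<in> vertices \<and> adjacent u v"
proof
  assume "{u, v} \<in> edges"
  then obtain a b where "{u, v} = {a, b}" "a \<in> vertices" "b \<in> vertices" "adjacent a b"
    unfolding edges_def adj_graph_def by blast
  then show "u \<in> vertices \<and> v \<in> vertices \<and> adjacent u v"
    using adjacent_sym by (auto simp: doubleton_eq_iff)
qed (auto simp: edges_def adj_graph_def)

lemma simple_graph_blow_up: "simple_graph vertices edges"
  unfolding edges_def using finite_vertices by (rule simple_graph_adj_graph) (simp add: adjacent_def)

lemma neighbours:
  assumes v: "v \<in> vertices"
  shows "{u \<in> vertices. adjacent v u} = vertices - {v} - {u \<in> vertices. point u \<in> row (point v) - {point v}}"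
proof -
  have same_row: "row (point v) = row (point u) \<longleftrightarrow> point u \<in> row (point v)"
    if "u \<in> vertices" for u
    using parallel_through_eq_iff[OF lines(1), of "point v" "point u"] point_vertex that v
    unfolding row_def by (simp add: eq_commute)
  have "adjacent v u \<longleftrightarrow> u \<noteq> v \<and> point u \<notin> row (point v) - {point v}" if "u \<in> vertices" for u
    using same_row[OF that] unfolding adjacent_def by auto
  then show ?thesis
    by blast
qed

lemma degree_vertex:
  assumes v: "v \<in> vertices"
  shows "degree edges v + (q - 1) * m + 1 = card vertices + weight (point v)"
proof -
  let ?p = "point v"
  let ?B = "{u \<in> vertices. point u \<in> row ?p - {?p}}"
  have row: "row ?p \<in> L" "?p \<in> row ?p" "parallel R0 (row ?p)"
    using parallel_through[OF lines(1)] point_vertex[OF v] unfolding row_def by auto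
  have "card ?B = sum weight (row ?p - {?p})"
    using card_vertices_over[of "row ?p - {?p}"] line_subset[OF row(1)] by blast
  then have "card ?B + weight ?p = sum weight (row ?p)"
    using sum.remove[OF finite_line[OF row(1)] row(2), of weight] by simp
  also have "\<dots> = (q - 1) * m"
    using sum_weight_row row by blast
  finally have B: "card ?B + weight ?p = (q - 1) * m" .
  have B_sub: "?B \<subseteq> vertices - {v}"
    by auto
  have "degree edges v = card {u \<in> vertices. adjacent v u}"
    unfolding edges_def by (rule degree_adj_graph[OF adjacent_sym v])
  also have "\<dots> = card (vertices - {v}) - card ?B"
    unfolding neighbours[OF v] using B_sub finite_vertices by (simp add: card_Diff_subset finite_subset)
  finally have "degree edges v + card ?B + 1 = card vertices"
    using card_mono[OF _ B_sub] finite_vertices v card_Diff_singleton[OF v] card_gt_0_iff[of vertices]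
    by fastforce
  then show ?thesis
    using B by linarith
qed

lemma min_degree_blow_up: "min_degree vertices edges + (q - 1) * m + 2 = card vertices + m"
proof -
  define d where "d = card vertices + m - (q - 1) * m - 2"
  obtain p where p: "p \<in> P" "weight p = m - 1"
    using ex_point_of_least_weight by blast
  then have v: "prod_encode (p, 0) \<in> vertices"
    using m_ge_2 unfolding vertices_def by force
  have "degree edges (prod_encode (p, 0)) = d"
    using degree_vertex[OF v] p m_ge_2 unfolding d_def point_def by simp
  moreover have "d \<le> degree edges v" if "v \<in> vertices" for v
  proof -
    have "m - 1 \<le> weight (point v)"
      using weight_ge_if_pos point_vertex[OF that] by blast
    then show ?thesis
      using degree_vertex[OF that] unfolding d_def by linarith
  qed
  ultimately have "min_degree vertices edges = d"
    unfolding min_degree_def using v finite_vertices by (intro Min_eqI) auto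
  then show ?thesis
    using degree_vertex[OF v] p m_ge_2 unfolding d_def point_def by simp
qed

definition dir_line :: "nat \<Rightarrow> nat \<Rightarrow> nat set" where
  "dir_line i p = parallel_through (dir i) p"

definition colour :: "nat set \<Rightarrow> nat" where
  "colour e = (LEAST i. i < q \<and> (\<forall>u\<in>e. \<forall>v\<in>e. dir_line i (point u) = dir_line i (point v)))"

lemma edge_in_dir_line:
  assumes "{u, v} \<in> edges"
  shows "\<exists>i<q. dir_line i (point u) = dir_line i (point v)"
proof (cases "point u = point v")
  case True
  then show ?thesis
    using order_ge_2 by (auto intro!: exI[of _ 0])
next
  case False
  have u: "point u \<in> P" and v: "point v \<in> P" and rows: "row (point u) \<noteq> row (point v)"
    using assms point_vertex False unfolding edge_iff adjacent_def by auto
  then obtain l where l: "l \<in> L" "point u \<in> l" "point v \<in> l"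
    using ex1_line False by blast
  have "\<not> parallel l R0"
    using rows parallel_through_eqI[OF lines(1) l(1)] l(2,3) parallel_sym unfolding row_def by metis
  then obtain i where "i < q" "parallel (dir i) l"
    using dir_exhaustive l(1) by blast
  then show ?thesis
    using parallel_through_eqI[OF dir_line l(1)] l(2,3) unfolding dir_line_def by metis
qed

lemma colour_edge:
  assumes "{u, v} \<in> edges"
  shows "colour {u, v} < q" "dir_line (colour {u, v}) (point u) = dir_line (colour {u, v}) (point v)"
proof -
  have "\<exists>i. i < q \<and> (\<forall>x\<in>{u, v}. \<forall>y\<in>{u, v}. dir_line i (point x) = dir_line i (point y))"
    using edge_in_dir_line[OF assms] by auto
  from LeastI_ex[OF this]
  have "colour {u, v} < q \<and> (\<forall>x\<in>{u, v}. \<forall>y\<in>{u, v}.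
          dir_line (colour {u, v}) (point x) = dir_line (colour {u, v}) (point y))"
    unfolding colour_def .
  then show "colour {u, v} < q" "dir_line (colour {u, v}) (point u) = dir_line (colour {u, v}) (point v)"
    by blast+
qed

lemma r_colouring_colour: "r_colouring q edges colour"
  unfolding r_colouring_def
proof
  fix e assume "e \<in> edges"
  moreover from this obtain u v where "e = {u, v}"
    unfolding edges_def adj_graph_def by blast
  ultimately show "colour e < q"
    using colour_edge(1) by blast
qed

lemma card_mono_component_less:
  assumes i: "i < q" and C: "mono_component vertices edges colour i C"
  shows "card C < q * m"
proof -
  obtain u where u: "u \<in> vertices" and C_eq: "C = {v \<in> vertices. (u, v) \<in> (colour_adj edges colour i)\<^sup>*}"
    using C unfolding mono_component_def by blast
  let ?l = "dir_line i (point u)"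
  have l: "?l \<in> L" "parallel (dir i) ?l"
    using parallel_through[OF dir_line[OF i]] point_vertex[OF u] unfolding dir_line_def by auto
  have C_sub: "C \<subseteq> {v \<in> vertices. point v \<in> ?l}"
  proof
    fix v assume "v \<in> C"
    then have v: "v \<in> vertices" "(u, v) \<in> (colour_adj edges colour i)\<^sup>*"
      using C_eq by auto
    have "dir_line i (point x) = dir_line i (point y)" if "{x, y} \<in> edges" "colour {x, y} = i" for x y
      using colour_edge(2)[OF that(1)] that(2) by simp
    then have "dir_line i (point v) = ?l"
      by (rule colour_adj_rtrancl_invariant[OF _ v(2)])
    with v(1) have "v \<in> vertices" "dir_line i (point v) = ?l" by blast+
    then show "v \<in> {v \<in> vertices. point v \<in> ?l}"
      using parallel_through(2)[OF dir_line[OF i]] point_vertex unfolding dir_line_def by force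
  qed
  then have "card C \<le> sum weight ?l"
    using card_mono[OF _ C_sub] card_vertices_over[OF line_subset[OF l(1)]] finite_vertices by simp
  also have "\<dots> < q * m"
    using sum_weight_line l parallel_trans[OF dir_line[OF i] l(1) lines(1)] parallel_sym
      dir_nonparallel_R0[OF i] by metis
  finally show ?thesis .
qed

lemma mc_blow_up_less: "mc q vertices edges < q * m"
proof (rule mc_less_if_components_less[OF r_colouring_colour])
  show "vertices \<noteq> {}"
    using card_vertices order_ge_2 m_ge_2 by auto
qed (use order_ge_2 card_mono_component_less in auto)

lemma real_min_degree_blow_up:
  "real (min_degree vertices edges)
     = (1 - (real q - 2) / (real q ^ 2 - real q)) * real (card vertices) - 2"
proof -
  have "real (min_degree vertices edges) + real (q - 1) * real m + 2 = real (card vertices) + real m"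
    using min_degree_blow_up by (metis of_nat_add of_nat_mult of_nat_numeral)
  then have degree_eq:
    "real (min_degree vertices edges) + (real q - 1) * real m + 2 = real (card vertices) + real m"
    using order_ge_2 by (simp add: of_nat_diff)
  have "real q ^ 2 - real q \<noteq> 0"
    using order_ge_2 by (simp add: power2_eq_square)
  then have "(real q - 2) / (real q ^ 2 - real q) * real (card vertices) = (real q - 2) * real m"
    using card_vertices order_ge_2 by (simp add: of_nat_diff power2_eq_square field_simps)
  then have "(1 - (real q - 2) / (real q ^ 2 - real q)) * real (card vertices) - 2
      = real (card vertices) - (real q - 2) * real m - 2"
    by (simp add: left_diff_distrib)
  also have "\<dots> = real (min_degree vertices edges)"
    using degree_eq by (simp add: left_diff_distrib)
  finally show ?thesis ..
qed

lemma real_mc_blow_up_less: "real (mc q vertices edges) < real (card vertices) / (real q - 1)"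
proof -
  have "real (mc q vertices edges) < real (q * m)"
    using mc_blow_up_less by (simp only: of_nat_less_iff)
  also have "\<dots> = real (card vertices) / (real q - 1)"
    using card_vertices order_ge_2 by (simp add: of_nat_diff)
  finally show ?thesis .
qed

end

lemma ex_plane_blow_up:
  assumes "affine_plane (P :: nat set) L q" "3 \<le> q" "(q - 1) * (q - 2) + 1 \<le> m"
  shows "\<exists>R0 l0 l1 l2 dir. plane_blow_up P L q R0 l0 l1 l2 m dir"
proof -
  interpret finite_affine_plane P L q
    using assms(1,2) by unfold_locales auto
  obtain R0 where R0: "R0 \<in> L"
    using card_lines assms(2) by fastforce
  obtain dir where dir: "\<forall>i<q. dir i \<in> L \<and> \<not> parallel (dir i) R0"
    "\<forall>l\<in>L. \<not> parallel l R0 \<longrightarrow> (\<exists>i<q. parallel (dir i) l)"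
    using ex_direction_enumeration[OF R0] by blast
  then have "dir 0 \<in> L" "\<not> parallel (dir 0) R0"
    using assms(2) by auto
  then obtain l1 l2 where "l1 \<in> L" "l2 \<in> L" "dir 0 \<inter> l1 = {}" "dir 0 \<inter> l2 = {}" "l1 \<inter> l2 = {}"
    using ex_disjoint_lines[OF assms(2)] by blast
  then have "plane_blow_up P L q R0 (dir 0) l1 l2 m dir"
    using assms R0 dir \<open>\<not> parallel (dir 0) R0\<close> by unfold_locales auto
  then show ?thesis
    by blast
qed

theorem theorem1p3:
  fixes n r :: nat
  assumes "r \<ge> 3"
    and "n \<ge> r * (r - 1) * ((r - 1) * (r - 2) + 1)"
    and "(r^2 - r) dvd n"
    and "affine_plane_exists r"
  shows "\<exists>(V :: nat set) E. simple_graph V E \<and> card V = n \<and>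
           real (min_degree V E) = (1 - (real r - 2) / (real r ^ 2 - real r)) * real n - 2 \<and>
           real (mc r V E) < real n / (real r - 1)"
proof -
  obtain P :: "nat set" and L where plane: "affine_plane P L r"
    using assms(4) unfolding affine_plane_exists_def by blast
  have "r^2 - r = r * (r - 1)"
    by (simp add: power2_eq_square diff_mult_distrib2)
  then obtain m where n: "n = r * (r - 1) * m"
    using assms(3) by (auto elim: dvdE)
  then have "r * (r - 1) * ((r - 1) * (r - 2) + 1) \<le> r * (r - 1) * m"
    using assms(2) by simp
  then have "(r - 1) * (r - 2) + 1 \<le> m"
    by (rule mult_left_le_imp_le) (use assms(1) in simp)
  then obtain R0 l0 l1 l2 dir where "plane_blow_up P L r R0 l0 l1 l2 m dir"
    using ex_plane_blow_up[OF plane assms(1)] by blast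
  then interpret plane_blow_up P L r R0 l0 l1 l2 m dir .
  show ?thesis
    using simple_graph_blow_up real_min_degree_blow_up real_mc_blow_up_less card_vertices n by metis
qed

end
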